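(* For any graph $G$ with no isolated vertex, order $n$ and maximum degree $\Delta$, $$\left\lceil\frac{2n}{\Delta+1}\right\rceil\le\gamma_{(2,1,0)}(G)\le\min\{\gamma_{\times2}(G)-|L(G)|+|S(G)|,\;2\gamma(G)\}.$$
   Context: All graphs are finite and simple; $N(v)$ is the open neighbourhood and $N[v]=N(v)\cup\{v\}$. $\gamma_{(2,1,0)}(G)$ is the minimum of $\sum_v f(v)$ over functions $f:V(G)\to\{0,1,2\}$ such that $\sum_{u\in N(v)}f(u)\ge2$ whenever $f(v)=0$ and $\sum_{u\in N(v)}f(u)\ge1$ whenever $f(v)=1$. $\gamma(G)$ is the domination number and $\gamma_{\times2}(G)$ is the minimum size of $D\subseteq V(G)$ with $|N[v]\cap D|\ge2$ for every $v\in V(G)$. $L(G)$ is the set of leaves (degree-one vertices) and $S(G)$ the set of support vertices (vertices adjacent to a leaf). *)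

theory Defs
  imports Complex_Main
begin

definition simple_graph :: "'a set \<Rightarrow> ('a \<Rightarrow> 'a \<Rightarrow> bool) \<Rightarrow> bool" where
  "simple_graph V E \<longleftrightarrow> finite V \<and> (\<forall>u v. E u v \<longrightarrow> u \<in> V \<and> v \<in> V)
     \<and> (\<forall>u v. E u v \<longrightarrow> E v u) \<and> (\<forall>v. \<not> E v v)"

definition nbhd :: "'a set \<Rightarrow> ('a \<Rightarrow> 'a \<Rightarrow> bool) \<Rightarrow> 'a \<Rightarrow> 'a set" where
  "nbhd V E v = {u \<in> V. E v u}"

definition cnbhd :: "'a set \<Rightarrow> ('a \<Rightarrow> 'a \<Rightarrow> bool) \<Rightarrow> 'a \<Rightarrow> 'a set" where
  "cnbhd V E v = insert v (nbhd V E v)"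

definition degree :: "'a set \<Rightarrow> ('a \<Rightarrow> 'a \<Rightarrow> bool) \<Rightarrow> 'a \<Rightarrow> nat" where
  "degree V E v = card (nbhd V E v)"

definition max_degree :: "'a set \<Rightarrow> ('a \<Rightarrow> 'a \<Rightarrow> bool) \<Rightarrow> nat" where
  "max_degree V E = Max (degree V E ` V)"

definition no_isolated :: "'a set \<Rightarrow> ('a \<Rightarrow> 'a \<Rightarrow> bool) \<Rightarrow> bool" where
  "no_isolated V E \<longleftrightarrow> (\<forall>v \<in> V. nbhd V E v \<noteq> {})"

definition leaves :: "'a set \<Rightarrow> ('a \<Rightarrow> 'a \<Rightarrow> bool) \<Rightarrow> 'a set" where
  "leaves V E = {v \<in> V. degree V E v = 1}"

definition supports :: "'a set \<Rightarrow> ('a \<Rightarrow> 'a \<Rightarrow> bool) \<Rightarrow> 'a set" where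
  "supports V E = {v \<in> V. \<exists>u \<in> leaves V E. E v u}"

definition dominating_set :: "'a set \<Rightarrow> ('a \<Rightarrow> 'a \<Rightarrow> bool) \<Rightarrow> 'a set \<Rightarrow> bool" where
  "dominating_set V E D \<longleftrightarrow> D \<subseteq> V \<and> (\<forall>v \<in> V. cnbhd V E v \<inter> D \<noteq> {})"

definition domination_number :: "'a set \<Rightarrow> ('a \<Rightarrow> 'a \<Rightarrow> bool) \<Rightarrow> nat" where
  "domination_number V E = Min {card D | D. dominating_set V E D}"

definition double_dominating_set :: "'a set \<Rightarrow> ('a \<Rightarrow> 'a \<Rightarrow> bool) \<Rightarrow> 'a set \<Rightarrow> bool" where
  "double_dominating_set V E D \<longleftrightarrow> D \<subseteq> V \<and> (\<forall>v \<in> V. card (cnbhd V E v \<inter> D) \<ge> 2)"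

definition double_domination_number :: "'a set \<Rightarrow> ('a \<Rightarrow> 'a \<Rightarrow> bool) \<Rightarrow> nat" where
  "double_domination_number V E = Min {card D | D. double_dominating_set V E D}"

definition dom210_function :: "'a set \<Rightarrow> ('a \<Rightarrow> 'a \<Rightarrow> bool) \<Rightarrow> ('a \<Rightarrow> nat) \<Rightarrow> bool" where
  "dom210_function V E f \<longleftrightarrow> (\<forall>v \<in> V. f v \<le> 2
      \<and> (f v = 0 \<longrightarrow> (\<Sum>u \<in> nbhd V E v. f u) \<ge> 2)
      \<and> (f v = 1 \<longrightarrow> (\<Sum>u \<in> nbhd V E v. f u) \<ge> 1))"

definition dom210_number :: "'a set \<Rightarrow> ('a \<Rightarrow> 'a \<Rightarrow> bool) \<Rightarrow> nat" where
  "dom210_number V E = Min {(\<Sum>v \<in> V. f v) | f. dom210_function V E f}"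

end

theory Submission
  imports Defs
begin

(* A (2,1,0)-dominating function f puts weight at least 2 on every closed neighbourhood.
   Summing over all vertices counts f u exactly deg u + 1 \<le> \<Delta> + 1 times, so 2n \<le> (\<Delta> + 1) w(f).
   Conversely, twice the indicator of a dominating set is (2,1,0)-dominating. A double dominating
   set D contains every leaf and every support vertex; raising the supports that are not leaves
   to 2 and lowering the leaves that are not supports to 0 turns its indicator into a
   (2,1,0)-dominating function of weight |D| - |L| + |S|. *)

lemma Min_bounded_le:
  fixes g :: "'b \<Rightarrow> nat"
  assumes "\<And>x. P x \<Longrightarrow> g x \<le> b" and "P x"
  shows "Min {g x | x. P x} \<le> g x"
proof -
  have "{g x | x. P x} \<subseteq> {..b}" using assms(1) by auto
  then show ?thesis using assms(2) finite_subset by (intro Min_le) auto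
qed

lemma Min_bounded_attained:
  fixes g :: "'b \<Rightarrow> nat"
  assumes "\<And>x. P x \<Longrightarrow> g x \<le> b" and "P x\<^sub>0"
  shows "\<exists>x. P x \<and> Min {g x | x. P x} = g x"
proof -
  have "{g x | x. P x} \<subseteq> {..b}" using assms(1) by auto
  then have "Min {g x | x. P x} \<in> {g x | x. P x}"
    using assms(2) finite_subset by (intro Min_in) auto
  then show ?thesis by auto
qed

lemma simple_graph_finite: "simple_graph V E \<Longrightarrow> finite V"
  by (simp add: simple_graph_def)

lemma finite_nbhd: "simple_graph V E \<Longrightarrow> finite (nbhd V E v)"
  by (simp add: simple_graph_def nbhd_def)

lemma sum_cnbhd:
  assumes "simple_graph V E"
  shows "(\<Sum>u \<in> cnbhd V E v. f u) = f v + (\<Sum>u \<in> nbhd V E v. f u)"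
proof -
  have "v \<notin> nbhd V E v" using assms by (simp add: simple_graph_def nbhd_def)
  then show ?thesis using finite_nbhd[OF assms] by (simp add: cnbhd_def)
qed

lemma leafE:
  assumes "v \<in> leaves V E"
  obtains u where "nbhd V E v = {u}"
  using assms card_1_singletonE that unfolding leaves_def degree_def by blast

lemma degree_le_max_degree:
  "simple_graph V E \<Longrightarrow> v \<in> V \<Longrightarrow> degree V E v \<le> max_degree V E"
  by (simp add: max_degree_def simple_graph_finite)

lemma sum_sum_nbhd:
  assumes "simple_graph V E"
  shows "(\<Sum>v \<in> V. \<Sum>u \<in> nbhd V E v. g u) = (\<Sum>u \<in> V. g u * degree V E u)"
proof -
  have fin: "finite V" using assms by (rule simple_graph_finite)
  have "(\<Sum>v \<in> V. \<Sum>u \<in> nbhd V E v. g u) = (\<Sum>v \<in> V. \<Sum>u \<in> V. if E v u then g u else 0)"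
    unfolding nbhd_def by (simp add: sum.inter_filter fin)
  also have "\<dots> = (\<Sum>u \<in> V. \<Sum>v \<in> V. if E v u then g u else 0)"
    by (rule sum.swap)
  also have "\<dots> = (\<Sum>u \<in> V. g u * card {v \<in> V. E v u})"
    by (simp add: sum.inter_filter[symmetric] fin mult.commute)
  also have "\<dots> = (\<Sum>u \<in> V. g u * degree V E u)"
  proof (rule sum.cong)
    fix u assume "u \<in> V"
    have "{v \<in> V. E v u} = nbhd V E u" using assms by (auto simp: nbhd_def simple_graph_def)
    then show "g u * card {v \<in> V. E v u} = g u * degree V E u" by (simp add: degree_def)
  qed simp
  finally show ?thesis .
qed

lemma dom210_function_iff:
  assumes "simple_graph V E"
  shows "dom210_function V E f \<longleftrightarrow> (\<forall>v \<in> V. f v \<le> 2 \<and> 2 \<le> (\<Sum>u \<in> cnbhd V E v. f u))"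
proof -
  have pointwise: "(n \<le> 2 \<and> (n = 0 \<longrightarrow> 2 \<le> s) \<and> (n = 1 \<longrightarrow> 1 \<le> s)) \<longleftrightarrow> n \<le> 2 \<and> 2 \<le> n + s"
    for n s :: nat
    by auto
  show ?thesis by (simp only: dom210_function_def sum_cnbhd[OF assms] pointwise)
qed

lemma dom210_function_weight_le:
  assumes "dom210_function V E f"
  shows "(\<Sum>v \<in> V. f v) \<le> 2 * card V"
proof -
  have "(\<Sum>v \<in> V. f v) \<le> (\<Sum>v \<in> V. 2)"
    using assms by (intro sum_mono) (simp add: dom210_function_def)
  then show ?thesis by simp
qed

lemma dom210_number_le:
  "dom210_function V E f \<Longrightarrow> dom210_number V E \<le> (\<Sum>v \<in> V. f v)"
  unfolding dom210_number_def
  by (rule Min_bounded_le[where P = "dom210_function V E" and g = "\<lambda>f. \<Sum>v \<in> V. f v",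
        OF dom210_function_weight_le[of V E]])

lemma dom210_number_attained:
  obtains f where "dom210_function V E f" and "dom210_number V E = (\<Sum>v \<in> V. f v)"
proof -
  have "dom210_function V E (\<lambda>_. 2)" by (simp add: dom210_function_def)
  then show ?thesis
    using that Min_bounded_attained[where P = "dom210_function V E" and g = "\<lambda>f. \<Sum>v \<in> V. f v",
        OF dom210_function_weight_le[of V E]]
    unfolding dom210_number_def by blast
qed

lemma dom210_weight_lower_bound:
  assumes G: "simple_graph V E" and f: "dom210_function V E f"
  shows "2 * card V \<le> (max_degree V E + 1) * (\<Sum>v \<in> V. f v)"
proof -
  have "2 * card V = (\<Sum>v \<in> V. 2::nat)" by simp
  also have "\<dots> \<le> (\<Sum>v \<in> V. f v + (\<Sum>u \<in> nbhd V E v. f u))"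
    using f by (intro sum_mono) (simp add: dom210_function_iff[OF G] sum_cnbhd[OF G])
  also have "\<dots> = (\<Sum>v \<in> V. f v) + (\<Sum>u \<in> V. f u * degree V E u)"
    by (simp add: sum.distrib sum_sum_nbhd[OF G])
  also have "\<dots> \<le> (\<Sum>v \<in> V. f v) + (\<Sum>u \<in> V. f u * max_degree V E)"
    using degree_le_max_degree[OF G] by (intro add_left_mono sum_mono) simp
  also have "\<dots> = (max_degree V E + 1) * (\<Sum>v \<in> V. f v)"
    by (simp add: sum_distrib_right[symmetric] algebra_simps)
  finally show ?thesis .
qed

lemma ceiling_divide_plus_one_le:
  fixes a b c :: nat
  assumes "a \<le> (c + 1) * b"
  shows "\<lceil>real a / (real c + 1)\<rceil> \<le> int b"
proof -
  have "real a \<le> real ((c + 1) * b)" using assms by (simp only: of_nat_le_iff)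
  then have "real a \<le> real b * (real c + 1)" by (simp add: algebra_simps)
  then show ?thesis by (simp add: ceiling_le_iff divide_le_eq add_pos_nonneg)
qed

lemma domination_number_attained:
  assumes G: "simple_graph V E"
  obtains D where "dominating_set V E D" and "domination_number V E = card D"
proof -
  have bound: "card D \<le> card V" if "dominating_set V E D" for D
    using that simple_graph_finite[OF G] by (intro card_mono) (auto simp: dominating_set_def)
  have "dominating_set V E V" by (auto simp: dominating_set_def cnbhd_def)
  then show ?thesis
    using that Min_bounded_attained[where P = "dominating_set V E" and g = card, OF bound]
    unfolding domination_number_def by blast
qed

lemma dom210_number_le_twice_dominating_set:
  assumes G: "simple_graph V E" and D: "dominating_set V E D"
  shows "dom210_number V E \<le> 2 * card D"
proof -
  define f where "f v = (if v \<in> D then 2 else 0 :: nat)" for v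
  have "dom210_function V E f"
    unfolding dom210_function_iff[OF G]
  proof (intro ballI conjI)
    fix v assume "v \<in> V"
    then obtain u where u: "u \<in> cnbhd V E v" "u \<in> D" using D by (auto simp: dominating_set_def)
    then have "f u \<le> (\<Sum>u \<in> cnbhd V E v. f u)"
      using finite_nbhd[OF G] by (intro member_le_sum) (auto simp: cnbhd_def)
    then show "2 \<le> (\<Sum>u \<in> cnbhd V E v. f u)" using u(2) by (simp add: f_def)
  qed (simp add: f_def)
  then have "dom210_number V E \<le> (\<Sum>v \<in> V. f v)" by (rule dom210_number_le)
  also have "\<dots> = 2 * card D"
    using D simple_graph_finite[OF G] by (simp add: f_def sum.If_cases dominating_set_def Int_absorb1)
  finally show ?thesis .
qed

lemma double_dominating_set_vertex_set:
  assumes G: "simple_graph V E" and "no_isolated V E"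
  shows "double_dominating_set V E V"
  unfolding double_dominating_set_def
proof (intro conjI ballI)
  fix v assume v: "v \<in> V"
  then obtain u where u: "u \<in> nbhd V E v" using assms(2) by (auto simp: no_isolated_def)
  then have "u \<noteq> v" and "{u, v} \<subseteq> cnbhd V E v \<inter> V"
    using G v by (auto simp: nbhd_def cnbhd_def simple_graph_def)
  then show "2 \<le> card (cnbhd V E v \<inter> V)"
    using card_mono[of "cnbhd V E v \<inter> V" "{u, v}"] simple_graph_finite[OF G] by simp
qed simp

lemma double_domination_number_attained:
  assumes G: "simple_graph V E" and "no_isolated V E"
  obtains D where "double_dominating_set V E D" and "double_domination_number V E = card D"
proof -
  have bound: "card D \<le> card V" if "double_dominating_set V E D" for D
    using that simple_graph_finite[OF G] by (intro card_mono) (auto simp: double_dominating_set_def)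
  show ?thesis
    using that double_dominating_set_vertex_set[OF assms]
      Min_bounded_attained[where P = "double_dominating_set V E" and g = card, OF bound]
    unfolding double_domination_number_def by blast
qed

lemma double_dominating_set_leaf_edge:
  assumes D: "double_dominating_set V E D" and "v \<in> V" and "nbhd V E v = {u}"
  shows "v \<in> D" and "u \<in> D"
proof -
  have "cnbhd V E v = {v, u}" using assms(3) by (simp add: cnbhd_def)
  then have "2 \<le> card ({v, u} \<inter> D)"
    using D assms(2) by (auto simp: double_dominating_set_def)
  then show "v \<in> D" and "u \<in> D"
    by (auto simp: Int_insert_left split: if_splits)
qed

lemma leaf_neighbour:
  assumes G: "simple_graph V E" and v: "v \<in> leaves V E" and u: "nbhd V E v = {u}"
  shows "u \<in> supports V E" and "u \<in> leaves V E \<longleftrightarrow> v \<in> supports V E"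
proof -
  have "u \<in> V" "E v u" using u by (auto simp: nbhd_def)
  then have "E u v" using G by (simp add: simple_graph_def)
  then show "u \<in> supports V E" using v \<open>u \<in> V\<close> by (auto simp: supports_def)
  have "w = u" if "w \<in> leaves V E" "E v w" for w
    using that u by (auto simp: nbhd_def leaves_def)
  then show "u \<in> leaves V E \<longleftrightarrow> v \<in> supports V E"
    using v u by (auto simp: supports_def leaves_def nbhd_def)
qed

lemma leaves_supports_subset_double_dominating_set:
  assumes G: "simple_graph V E" and D: "double_dominating_set V E D"
  shows "leaves V E \<subseteq> D" and "supports V E \<subseteq> D"
proof -
  show "leaves V E \<subseteq> D"
  proof
    fix v assume v: "v \<in> leaves V E"
    then obtain u where "nbhd V E v = {u}" by (elim leafE)
    with v double_dominating_set_leaf_edge(1)[OF D] show "v \<in> D"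
      by (auto simp: leaves_def)
  qed
  show "supports V E \<subseteq> D"
  proof
    fix v assume "v \<in> supports V E"
    then obtain w where w: "w \<in> leaves V E" "E v w" by (auto simp: supports_def)
    then obtain u where u: "nbhd V E w = {u}" by (elim leafE)
    have "v \<in> nbhd V E w" using G w by (auto simp: nbhd_def leaves_def simple_graph_def)
    with u w double_dominating_set_leaf_edge(2)[OF D _ u] show "v \<in> D"
      by (auto simp: leaves_def)
  qed
qed

text \<open>Since leaves and supports lie in every double dominating set, this takes the value 2 on
  supports that are not leaves, 0 on leaves that are not supports, and the indicator of \<open>D\<close>
  elsewhere.\<close>

definition dom210_of_double_dominating :: "'a set \<Rightarrow> ('a \<Rightarrow> 'a \<Rightarrow> bool) \<Rightarrow> 'a set \<Rightarrow> 'a \<Rightarrow> nat"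
  where "dom210_of_double_dominating V E D v =
    of_bool (v \<in> D) + of_bool (v \<in> supports V E) - of_bool (v \<in> leaves V E)"

lemma dom210_function_dom210_of_double_dominating:
  assumes G: "simple_graph V E" and D: "double_dominating_set V E D"
  shows "dom210_function V E (dom210_of_double_dominating V E D)"
proof -
  let ?f = "dom210_of_double_dominating V E D"
  note subset_D = leaves_supports_subset_double_dominating_set[OF G D]
  have "2 \<le> (\<Sum>u \<in> cnbhd V E v. ?f u)" if v: "v \<in> V" for v
  proof -
    consider (support) "v \<in> supports V E" "v \<notin> leaves V E" | (leaf) "v \<in> leaves V E"
      | (other) "v \<notin> supports V E" "v \<notin> leaves V E"
      by blast
    then show ?thesis
    proof cases
      case support
      then have "?f v = 2" using subset_D by (auto simp: dom210_of_double_dominating_def)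
      moreover have "?f v \<le> (\<Sum>u \<in> cnbhd V E v. ?f u)"
        using finite_nbhd[OF G] by (intro member_le_sum) (auto simp: cnbhd_def)
      ultimately show ?thesis by simp
    next
      case leaf
      then obtain u where u: "nbhd V E v = {u}" by (elim leafE)
      note partner = leaf_neighbour[OF G leaf u]
      have "?f v + ?f u = 2"
        using leaf partner subset_D by (auto simp: dom210_of_double_dominating_def)
      then show ?thesis using u by (simp add: sum_cnbhd[OF G])
    next
      case other
      have "of_bool (u \<in> D) \<le> ?f u" if "u \<in> cnbhd V E v" for u
      proof -
        have "u \<notin> leaves V E"
          using that other v by (auto simp: cnbhd_def nbhd_def supports_def)
        then show ?thesis by (simp add: dom210_of_double_dominating_def)
      qed
      then have "(\<Sum>u \<in> cnbhd V E v. of_bool (u \<in> D)) \<le> (\<Sum>u \<in> cnbhd V E v. ?f u)"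
        by (rule sum_mono)
      moreover have "2 \<le> card (cnbhd V E v \<inter> D)"
        using D v by (simp add: double_dominating_set_def)
      ultimately show ?thesis
        using finite_nbhd[OF G] by (simp add: cnbhd_def Collect_mem_eq)
    qed
  qed
  then show ?thesis
    unfolding dom210_function_iff[OF G] by (simp add: dom210_of_double_dominating_def)
qed

lemma sum_dom210_of_double_dominating:
  assumes G: "simple_graph V E" and D: "double_dominating_set V E D"
  shows "(\<Sum>v \<in> V. dom210_of_double_dominating V E D v) + card (leaves V E)
    = card D + card (supports V E)"
proof -
  note subset_D = leaves_supports_subset_double_dominating_set[OF G D]
  have "dom210_of_double_dominating V E D v + of_bool (v \<in> leaves V E)
      = of_bool (v \<in> D) + of_bool (v \<in> supports V E)" for v
    using subset_D by (auto simp: dom210_of_double_dominating_def)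
  then have "(\<Sum>v \<in> V. dom210_of_double_dominating V E D v) + (\<Sum>v \<in> V. of_bool (v \<in> leaves V E))
      = (\<Sum>v \<in> V. of_bool (v \<in> D)) + (\<Sum>v \<in> V. of_bool (v \<in> supports V E))"
    by (simp flip: sum.distrib)
  moreover have "D \<subseteq> V" using D by (simp add: double_dominating_set_def)
  ultimately show ?thesis
    using subset_D simple_graph_finite[OF G] by (simp add: Int_absorb1 Collect_mem_eq)
qed

lemma dom210_number_le_double_dominating_set:
  assumes G: "simple_graph V E" and D: "double_dominating_set V E D"
  shows "dom210_number V E + card (leaves V E) \<le> card D + card (supports V E)"
  using dom210_number_le[OF dom210_function_dom210_of_double_dominating[OF G D]]
    sum_dom210_of_double_dominating[OF G D]
  by linarith

theorem theorem36:
  fixes V :: "'a set" and E :: "'a \<Rightarrow> 'a \<Rightarrow> bool"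
  assumes "simple_graph V E" and "no_isolated V E"
  shows "\<lceil>2 * real (card V) / (real (max_degree V E) + 1)\<rceil> \<le> int (dom210_number V E)
    \<and> int (dom210_number V E) \<le> min (int (double_domination_number V E)
          - int (card (leaves V E)) + int (card (supports V E)))
        (2 * int (domination_number V E))"
proof -
  obtain f where f: "dom210_function V E f" "dom210_number V E = (\<Sum>v \<in> V. f v)"
    by (rule dom210_number_attained)
  obtain D\<^sub>2 where D\<^sub>2: "double_dominating_set V E D\<^sub>2" "double_domination_number V E = card D\<^sub>2"
    using double_domination_number_attained[OF assms] .
  obtain D\<^sub>1 where D\<^sub>1: "dominating_set V E D\<^sub>1" "domination_number V E = card D\<^sub>1"
    using domination_number_attained[OF assms(1)] .
  have "2 * card V \<le> (max_degree V E + 1) * dom210_number V E"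
    using dom210_weight_lower_bound[OF assms(1) f(1)] f(2) by simp
  then have "\<lceil>2 * real (card V) / (real (max_degree V E) + 1)\<rceil> \<le> int (dom210_number V E)"
    using ceiling_divide_plus_one_le[where a = "2 * card V"] by simp
  moreover have "dom210_number V E + card (leaves V E)
      \<le> double_domination_number V E + card (supports V E)"
    using dom210_number_le_double_dominating_set[OF assms(1) D\<^sub>2(1)] D\<^sub>2(2) by simp
  moreover have "dom210_number V E \<le> 2 * domination_number V E"
    using dom210_number_le_twice_dominating_set[OF assms(1) D\<^sub>1(1)] D\<^sub>1(2) by simp
  ultimately show ?thesis by linarith
qed

end
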